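(* Consider the miners' game with $n$ miners $s_1,\dots,s_n$, parameters $R>0$, $N>0$, unit prices $\lambda_1,\dots,\lambda_n>0$, where miner $s_i$ chooses $\mu_i\ge0$ and receives profit $P_i=\frac{\mu_i}{\sum_{j=1}^n\mu_j}RN-\lambda_i\mu_i$ (the fraction being $0$ if $\sum_j\mu_j=0$). Let $\boldsymbol{\mu}^*=(\mu_1^*,\dots,\mu_n^* )$ be a Nash equilibrium of this game. Then for any $i,j$, if $\lambda_i\le\lambda_j$ then $\mu_i^*\ge\mu_j^*$.
   Context: A Nash equilibrium is a profile $\boldsymbol{\mu}^*$ with all $\mu_i^*\ge 0$ such that no miner $s_i$ can strictly increase $P_i$ by unilaterally changing $\mu_i^*$ to another value $\mu_i\ge0$. *)

theory Defs
  imports Complex_Main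
begin

text \<open>Miners are indexed by 0,...,n-1. A strategy profile is mu :: nat => real
  (only the values at i < n matter). Profit of miner i.\<close>

definition miner_profit :: "nat \<Rightarrow> real \<Rightarrow> real \<Rightarrow> (nat \<Rightarrow> real) \<Rightarrow> (nat \<Rightarrow> real) \<Rightarrow> nat \<Rightarrow> real" where
  "miner_profit n R N lam mu i =
     (if (\<Sum>j<n. mu j) = 0 then 0 else mu i / (\<Sum>j<n. mu j) * R * N) - lam i * mu i"

definition nash_equilibrium :: "nat \<Rightarrow> real \<Rightarrow> real \<Rightarrow> (nat \<Rightarrow> real) \<Rightarrow> (nat \<Rightarrow> real) \<Rightarrow> bool" where
  "nash_equilibrium n R N lam mu \<longleftrightarrow>
     (\<forall>i<n. mu i \<ge> 0) \<and>
     (\<forall>i<n. \<forall>x::real. x \<ge> 0 \<longrightarrow>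
        \<not> (miner_profit n R N lam (mu(i := x)) i > miner_profit n R N lam mu i))"

end

theory Submission
  imports Defs
begin

text \<open>Write \<open>S = \<Sum>j. \<mu>\<^sub>j\<close> and \<open>T = R N\<close>. When miner \<open>k\<close> deviates from
  \<open>\<mu>\<^sub>k\<close> to \<open>x\<close>, its gain factors as \<open>(x - \<mu>\<^sub>k) (T (S - \<mu>\<^sub>k) / (S S') - \<lambda>\<^sub>k)\<close>, with \<open>S'\<close>
  the new total. Testing a small increase of the smaller stake \<open>\<mu>\<^sub>i\<close> and an equally
  small decrease of the larger stake \<open>\<mu>\<^sub>j\<close> therefore sandwiches the prices:
  \<open>\<lambda>\<^sub>j \<le> T (S - \<mu>\<^sub>j) / (S (S - e)) < T (S - \<mu>\<^sub>i) / (S (S + e)) \<le> \<lambda>\<^sub>i\<close>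
  for \<open>e = (\<mu>\<^sub>j - \<mu>\<^sub>i) / 2\<close>.\<close>

lemma sum_fun_upd:
  fixes f :: "'a \<Rightarrow> 'b::ab_group_add"
  assumes "finite A" and "k \<in> A"
  shows "sum (f(k := x)) A = sum f A - f k + x"
proof -
  have "sum (f(k := x)) A = x + sum f (A - {k})"
    using assms by (simp add: sum.remove)
  also have "\<dots> = sum f A - f k + x"
    using assms by (simp add: sum_diff1)
  finally show ?thesis .
qed

lemma miner_profit_deviation_gain:
  assumes "k < n"
    and S_pos: "(\<Sum>j<n. mu j) > 0"
    and S'_pos: "(\<Sum>j<n. mu j) - mu k + x > 0"
  shows "miner_profit n R N lam (mu(k := x)) k - miner_profit n R N lam mu k
       = (x - mu k) * (R * N * ((\<Sum>j<n. mu j) - mu k)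
            / ((\<Sum>j<n. mu j) * ((\<Sum>j<n. mu j) - mu k + x)) - lam k)"
proof -
  define S where "S = (\<Sum>j<n. mu j)"
  have "(\<Sum>j<n. (mu(k := x)) j) = S - mu k + x"
    unfolding S_def using \<open>k < n\<close> sum_fun_upd[of "{..<n}" k mu x] by simp
  then have "miner_profit n R N lam (mu(k := x)) k - miner_profit n R N lam mu k
      = R * N * (x / (S - mu k + x) - mu k / S) - lam k * (x - mu k)"
    using S_pos S'_pos unfolding miner_profit_def S_def[symmetric]
    by (simp add: algebra_simps)
  also have "x / (S - mu k + x) - mu k / S = (x - mu k) * (S - mu k) / (S * (S - mu k + x))"
    using S_pos S'_pos unfolding S_def[symmetric] by (simp add: field_simps)
  also have "R * N * ((x - mu k) * (S - mu k) / (S * (S - mu k + x))) - lam k * (x - mu k)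
      = (x - mu k) * (R * N * (S - mu k) / (S * (S - mu k + x)) - lam k)"
    by (simp add: algebra_simps)
  finally show ?thesis
    unfolding S_def .
qed

lemma nash_equilibrium_deviation_gain_nonpos:
  assumes "nash_equilibrium n R N lam mu" and "k < n" and "x \<ge> 0"
  shows "miner_profit n R N lam (mu(k := x)) k - miner_profit n R N lam mu k \<le> 0"
  using assms unfolding nash_equilibrium_def by (simp add: not_less)

lemma nash_equilibrium_price_upper_bound:
  assumes "nash_equilibrium n R N lam mu" and "k < n"
    and "0 < d" and "d \<le> mu k" and S_pos: "(\<Sum>j<n. mu j) > d"
  shows "lam k \<le> R * N * ((\<Sum>j<n. mu j) - mu k) / ((\<Sum>j<n. mu j) * ((\<Sum>j<n. mu j) - d))"
proof -
  have "(- d) * (R * N * ((\<Sum>j<n. mu j) - mu k)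
          / ((\<Sum>j<n. mu j) * ((\<Sum>j<n. mu j) - mu k + (mu k - d))) - lam k) \<le> 0"
    using nash_equilibrium_deviation_gain_nonpos[OF assms(1,2), of "mu k - d"]
      miner_profit_deviation_gain[OF \<open>k < n\<close>, of mu "mu k - d"] assms(3-5)
    by simp
  then show ?thesis
    using \<open>0 < d\<close> by (simp add: zero_le_mult_iff)
qed

lemma nash_equilibrium_price_lower_bound:
  assumes "nash_equilibrium n R N lam mu" and "k < n"
    and "0 < d" and S_pos: "(\<Sum>j<n. mu j) > 0"
  shows "R * N * ((\<Sum>j<n. mu j) - mu k) / ((\<Sum>j<n. mu j) * ((\<Sum>j<n. mu j) + d)) \<le> lam k"
proof -
  have "mu k \<ge> 0"
    using assms(1,2) unfolding nash_equilibrium_def by simp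
  then have "d * (R * N * ((\<Sum>j<n. mu j) - mu k)
          / ((\<Sum>j<n. mu j) * ((\<Sum>j<n. mu j) - mu k + (mu k + d))) - lam k) \<le> 0"
    using nash_equilibrium_deviation_gain_nonpos[OF assms(1,2), of "mu k + d"]
      miner_profit_deviation_gain[OF \<open>k < n\<close>, of mu "mu k + d"] assms(3,4)
    by simp
  then show ?thesis
    using \<open>0 < d\<close> by (simp add: mult_le_0_iff)
qed

lemma price_bounds_strict_less:
  fixes a b S T :: real
  assumes "0 < T" and "0 \<le> a" and "a < b" and "b \<le> S"
  defines "e \<equiv> (b - a) / 2"
  shows "T * (S - b) / (S * (S - e)) < T * (S - a) / (S * (S + e))"
proof -
  have "0 < e" "e < S"
    using assms unfolding e_def by auto
  have "(S - a) * (S - e) - (S - b) * (S + e) = (a + b) * e"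
    unfolding e_def by (simp add: field_simps)
  also have "\<dots> > 0"
    using assms \<open>0 < e\<close> by simp
  finally have "(S - b) / (S - e) < (S - a) / (S + e)"
    using \<open>0 < e\<close> \<open>e < S\<close> by (simp add: field_simps)
  then have "T / S * ((S - b) / (S - e)) < T / S * ((S - a) / (S + e))"
    by (rule mult_strict_left_mono) (use \<open>0 < T\<close> \<open>e < S\<close> \<open>0 < e\<close> in simp)
  then show ?thesis
    by (simp add: mult.assoc)
qed

theorem corollary1:
  fixes n :: nat and R N :: real and lam mu :: "nat \<Rightarrow> real" and i j :: nat
  assumes "R > 0" and "N > 0"
    and "\<forall>k<n. lam k > 0"
    and "nash_equilibrium n R N lam mu"
    and "i < n" and "j < n"
    and "lam i \<le> lam j"
  shows "mu i \<ge> mu j"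
proof (rule ccontr)
  assume "\<not> mu j \<le> mu i"
  define S where "S = (\<Sum>k<n. mu k)"
  define e where "e = (mu j - mu i) / 2"
  have "\<forall>k<n. mu k \<ge> 0"
    using assms(4) unfolding nash_equilibrium_def by simp
  then have "mu i \<ge> 0" and "mu j \<le> S"
    using \<open>i < n\<close> \<open>j < n\<close> unfolding S_def by (auto intro: member_le_sum)
  then have "0 < e" "e < mu j" "e < S"
    using \<open>\<not> mu j \<le> mu i\<close> unfolding e_def by auto
  have "R * N * (S - mu j) / (S * (S - e)) < R * N * (S - mu i) / (S * (S + e))"
    unfolding e_def using \<open>R > 0\<close> \<open>N > 0\<close> \<open>mu i \<ge> 0\<close> \<open>\<not> mu j \<le> mu i\<close> \<open>mu j \<le> S\<close>
    by (intro price_bounds_strict_less) auto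
  moreover have "lam j \<le> R * N * (S - mu j) / (S * (S - e))"
    using nash_equilibrium_price_upper_bound[OF assms(4,6)] \<open>0 < e\<close> \<open>e < mu j\<close> \<open>e < S\<close>
    unfolding S_def by simp
  moreover have "R * N * (S - mu i) / (S * (S + e)) \<le> lam i"
    using nash_equilibrium_price_lower_bound[OF assms(4,5)] \<open>0 < e\<close> \<open>e < S\<close>
    unfolding S_def by simp
  ultimately show False
    using \<open>lam i \<le> lam j\<close> by linarith
qed

end
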